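(* For every sequence $s\in\mathbb Z_{\ge0}^n$, the set of $s$-Tamari trees forms a sublattice of the $s$-weak order.
   Context: Let $s=(s(1),\dots,s(n))\in\mathbb Z_{\ge0}^n$. An $s$-decreasing tree is a planar rooted tree with $n$ internal nodes labeled bijectively by $1,\dots,n$ (leaves unlabeled), the node $i$ having exactly $s(i)+1$ ordered children (subtrees numbered $0,\dots,s(i)$ left to right), labels decreasing from the root. For $a<b$, $\mathrm{card}_T(b,a)$ is $k$ if $a$ lies in the $k$-th child subtree of $b$, $0$ if $a$ is not a descendant of $b$ and lies to the left of $b$, and $s(b)$ if $a$ is not a descendant of $b$ and lies to the right of $b$. The $s$-weak order: $T\le T'$ iff $\mathrm{card}_T(b,a)\le\mathrm{card}_{T'}(b,a)$ for all $a<b$; it is a lattice. An $s$-Tamari tree is an $s$-decreasing tree $T$ with $\mathrm{card}_T(c,a)\le\mathrm{card}_T(c,b)$ for all $1\le a<b<c\le n$. *)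

theory Defs
  imports Main
begin

text \<open>Planar rooted trees: leaves are unlabeled, internal nodes carry a label
and an ordered list of children (child subtrees numbered 0,1,... left to right).\<close>
datatype tr = Leaf | Node nat "tr list"

inductive at :: "tr \<Rightarrow> nat \<Rightarrow> nat list \<Rightarrow> bool" where
  at_root: "at (Node x ts) x []"
| at_child: "i < length ts \<Longrightarrow> at (ts ! i) y p \<Longrightarrow> at (Node x ts) y (i # p)"

fun arity_ok :: "(nat \<Rightarrow> nat) \<Rightarrow> tr \<Rightarrow> bool" where
  "arity_ok s Leaf = True"
| "arity_ok s (Node x ts) = (length ts = s x + 1 \<and> (\<forall>t\<in>set ts. arity_ok s t))"

fun decr :: "tr \<Rightarrow> bool" where
  "decr Leaf = True"
| "decr (Node x ts) =
     (\<forall>t\<in>set ts. decr t \<and> (case t of Leaf \<Rightarrow> True | Node y _ \<Rightarrow> y < x))"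

definition s_decreasing :: "nat \<Rightarrow> (nat \<Rightarrow> nat) \<Rightarrow> tr \<Rightarrow> bool" where
  "s_decreasing n s T \<longleftrightarrow>
     {x. \<exists>p. at T x p} = {1..n} \<and>
     (\<forall>x p q. at T x p \<longrightarrow> at T x q \<longrightarrow> p = q) \<and>
     arity_ok s T \<and> decr T"

definition addr :: "tr \<Rightarrow> nat \<Rightarrow> nat list" where
  "addr T x = (THE p. at T x p)"

definition left_of :: "nat list \<Rightarrow> nat list \<Rightarrow> bool" where
  "left_of pa pb \<longleftrightarrow> (\<exists>c i j u v. i < j \<and> pa = c @ i # u \<and> pb = c @ j # v)"

definition tcard :: "(nat \<Rightarrow> nat) \<Rightarrow> tr \<Rightarrow> nat \<Rightarrow> nat \<Rightarrow> nat" where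
  "tcard s T b a =
     (let pb = addr T b; pa = addr T a in
      if length pb < length pa \<and> take (length pb) pa = pb then pa ! length pb
      else if left_of pa pb then 0 else s b)"

definition s_weak_le :: "nat \<Rightarrow> (nat \<Rightarrow> nat) \<Rightarrow> tr \<Rightarrow> tr \<Rightarrow> bool" where
  "s_weak_le n s T T' \<longleftrightarrow>
     (\<forall>a b. 1 \<le> a \<longrightarrow> a < b \<longrightarrow> b \<le> n \<longrightarrow> tcard s T b a \<le> tcard s T' b a)"

definition s_tamari :: "nat \<Rightarrow> (nat \<Rightarrow> nat) \<Rightarrow> tr \<Rightarrow> bool" where
  "s_tamari n s T \<longleftrightarrow> s_decreasing n s T \<and>
     (\<forall>a b c. 1 \<le> a \<longrightarrow> a < b \<longrightarrow> b < c \<longrightarrow> c \<le> n \<longrightarrow> tcard s T c a \<le> tcard s T c b)"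

definition is_s_join :: "nat \<Rightarrow> (nat \<Rightarrow> nat) \<Rightarrow> tr \<Rightarrow> tr \<Rightarrow> tr \<Rightarrow> bool" where
  "is_s_join n s T T' J \<longleftrightarrow> s_decreasing n s J \<and> s_weak_le n s T J \<and> s_weak_le n s T' J \<and>
     (\<forall>U. s_decreasing n s U \<longrightarrow> s_weak_le n s T U \<longrightarrow> s_weak_le n s T' U \<longrightarrow> s_weak_le n s J U)"

definition is_s_meet :: "nat \<Rightarrow> (nat \<Rightarrow> nat) \<Rightarrow> tr \<Rightarrow> tr \<Rightarrow> tr \<Rightarrow> bool" where
  "is_s_meet n s T T' M \<longleftrightarrow> s_decreasing n s M \<and> s_weak_le n s M T \<and> s_weak_le n s M T' \<and>
     (\<forall>U. s_decreasing n s U \<longrightarrow> s_weak_le n s U T \<longrightarrow> s_weak_le n s U T' \<longrightarrow> s_weak_le n s U M)"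

end

(* The s-weak order is the pointwise order on card functions f(b,a) = card_T(b,a), and the card
   functions of s-decreasing trees are exactly the functions bounded by s(b) that satisfy two
   planarity conditions; Tamari trees are those with f(c,a) \<le> f(c,b) for a < b < c.
   A pointwise infimum of Tamari card functions is again such a function, so the meet of two
   Tamari trees is computed pointwise. Their join is the pointwise infimum of all Tamari upper
   bounds: it lies below every upper bound U, because lowering card_U(c,a) to the minimum of
   card_U(c,b) over a \<le> b < c yields a Tamari upper bound below U. Any other meet or join has
   the same card function and is therefore Tamari as well. *)

theory Submission
  imports Defs "HOL-Library.Sublist"
begin

lemma left_ofI: "i < j \<Longrightarrow> left_of (c @ i # u) (c @ j # v)"
  unfolding left_of_def by blast

lemma left_of_append: "left_of p q \<Longrightarrow> left_of (p @ u) (q @ v)"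
  unfolding left_of_def by fastforce

lemma left_of_Nil1 [simp]: "\<not> left_of [] q"
  and left_of_Nil2 [simp]: "\<not> left_of p []"
  unfolding left_of_def by simp_all

lemma left_of_Cons_Cons [simp]: "left_of (i # p) (j # q) \<longleftrightarrow> i < j \<or> i = j \<and> left_of p q"
proof
  assume "left_of (i # p) (j # q)"
  then obtain c k l u v where "k < l" "i # p = c @ k # u" "j # q = c @ l # v"
    unfolding left_of_def by blast
  then show "i < j \<or> i = j \<and> left_of p q"
    unfolding left_of_def by (cases c) auto
next
  show "i < j \<or> i = j \<and> left_of p q \<Longrightarrow> left_of (i # p) (j # q)"
    using left_ofI[of i j "[]"] left_ofI[of _ _ "i # _"] unfolding left_of_def by auto
qed

lemma left_of_trans: "left_of p q \<Longrightarrow> left_of q r \<Longrightarrow> left_of p r"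
proof (induction p arbitrary: q r)
  case (Cons i p)
  then show ?case by (cases q; cases r) auto
qed simp

lemma left_of_asym: "left_of p q \<Longrightarrow> \<not> left_of q p"
proof (induction p arbitrary: q)
  case (Cons i p)
  then show ?case by (cases q) auto
qed simp

lemma left_of_parallel: "left_of p q \<Longrightarrow> p \<parallel> q"
  unfolding left_of_def parallel_def by auto

lemma parallel_left_of: "p \<parallel> q \<Longrightarrow> left_of p q \<or> left_of q p"
  by (auto dest!: parallel_decomp simp: neq_iff intro: left_ofI)

lemma relative_position_cases:
  assumes "\<not> prefix p q"
  obtains j v where "p = q @ j # v" | "left_of p q" | "left_of q p"
proof (cases "prefix q p")
  case True
  then obtain r where "p = q @ r" "r \<noteq> []" using assms by (auto simp: prefix_def)
  then show ?thesis using that(1) by (cases r) auto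
next
  case False
  then show ?thesis using that(2,3) parallel_left_of assms by blast
qed

definition addr_card :: "nat \<Rightarrow> nat list \<Rightarrow> nat list \<Rightarrow> nat" where
  "addr_card S pb pa =
     (if strict_prefix pb pa then pa ! length pb else if left_of pa pb then 0 else S)"

lemma strict_prefix_iff_take: "strict_prefix p q \<longleftrightarrow> length p < length q \<and> take (length p) q = p"
proof
  assume "strict_prefix p q"
  then obtain r where "q = p @ r" "r \<noteq> []"
    unfolding strict_prefix_def prefix_def by auto
  then show "length p < length q \<and> take (length p) q = p" by simp
next
  assume *: "length p < length q \<and> take (length p) q = p"
  then obtain z zs where "drop (length p) q = z # zs"
    by (cases "drop (length p) q") auto
  then have "q = p @ z # zs" using * append_take_drop_id[of "length p" q] by simp
  then show "strict_prefix p q" by (rule strict_prefixI')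
qed

lemma tcard_addr_card: "tcard s T b a = addr_card (s b) (addr T b) (addr T a)"
  unfolding tcard_def addr_card_def strict_prefix_iff_take Let_def ..

lemma addr_card_child [simp]: "addr_card S p (p @ j # v) = j"
  unfolding addr_card_def by (simp add: strict_prefixI')

lemma addr_card_left: "left_of q p \<Longrightarrow> addr_card S p q = 0"
  using left_of_parallel[of q p] by (simp add: addr_card_def parallel_def strict_prefix_def)

lemma addr_card_right: "left_of p q \<Longrightarrow> addr_card S p q = S"
  using left_of_parallel[of p q] left_of_asym[of p q]
  by (simp add: addr_card_def parallel_def strict_prefix_def)

lemma addr_card_Cons [simp]: "addr_card S (i # p) (i # q) = addr_card S p q"
  unfolding addr_card_def by simp

lemma addr_card_less_left_of:
  assumes "\<not> prefix pa p" and "\<not> prefix pb p" and "\<And>j v. pb = p @ j # v \<Longrightarrow> j \<le> S"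
    and "addr_card S p pa < addr_card S p pb"
  shows "left_of pa pb"
  using assms(1)
proof (cases rule: relative_position_cases)
  case (1 i u)
  from assms(2) show ?thesis
    by (cases rule: relative_position_cases)
      (use 1 assms(4) in \<open>auto simp: addr_card_left intro: left_ofI
        dest: left_of_append[of p pb "i # u" "[]"]\<close>)
next
  case 2
  from assms(2) show ?thesis
    by (cases rule: relative_position_cases)
      (use 2 assms(4) in \<open>auto simp: addr_card_left intro: left_of_trans
        dest: left_of_append[of pa p "[]"]\<close>)
next
  case 3
  from assms(2) show ?thesis
    by (cases rule: relative_position_cases)
      (use 3 assms(3,4) in \<open>auto simp: addr_card_left addr_card_right\<close>)
qed

inductive_simps at_Leaf [simp]: "at Leaf y p"
inductive_simps at_Node_Nil [simp]: "at (Node x ts) y []"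
inductive_simps at_Node_Cons [simp]: "at (Node x ts) y (i # p)"

lemma at_Nil_root: "at T y [] \<Longrightarrow> \<exists>ts. T = Node y ts"
  by (cases T) auto

lemma at_same_addr: "at T x p \<Longrightarrow> at T y p \<Longrightarrow> x = y"
  by (induction p arbitrary: T) (auto elim: at.cases)

lemma decr_at_le_root: "decr (Node z ts) \<Longrightarrow> at (Node z ts) y p \<Longrightarrow> y \<le> z"
proof (induction p arbitrary: z ts)
  case (Cons i p)
  then obtain z' ts' where child: "ts ! i = Node z' ts'" "i < length ts" "at (ts ! i) y p"
    by (cases "ts ! i") auto
  have "ts ! i \<in> set ts" using child(2) by (rule nth_mem)
  then have "decr (ts ! i)" and "z' < z" using Cons.prems(1) child(1) by auto
  then show ?case using Cons.IH child by fastforce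
qed simp

lemma decr_at_descendant_less:
  assumes "decr T" "at T x p" "at T y (p @ q)" "q \<noteq> []"
  shows "y < x"
  using assms
proof (induction p arbitrary: T)
  case Nil
  then obtain ts i q' where T: "T = Node x ts" and q: "q = i # q'"
    by (cases q) (auto dest: at_Nil_root)
  with Nil obtain z ts' where child: "ts ! i = Node z ts'" "i < length ts" "at (ts ! i) y q'"
    by (cases "ts ! i") auto
  have "ts ! i \<in> set ts" using child(2) by (rule nth_mem)
  then have "decr (ts ! i)" and "z < x" using Nil.prems(1) T child(1) by auto
  then show ?case using decr_at_le_root child by fastforce
next
  case (Cons i p)
  then obtain z ts where "T = Node z ts" "i < length ts" "at (ts ! i) x p" "at (ts ! i) y (p @ q)"
    by (auto elim: at.cases)
  moreover have "decr (ts ! i)" using Cons.prems(1) calculation(1,2) nth_mem by fastforce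
  ultimately show ?case using Cons.IH Cons.prems(4) by blast
qed

lemma arity_ok_child_index:
  "arity_ok s T \<Longrightarrow> at T x p \<Longrightarrow> at T y (p @ j # v) \<Longrightarrow> j \<le> s x"
proof (induction p arbitrary: T)
  case Nil
  then show ?case by (cases T) auto
next
  case (Cons i p)
  then show ?case by (cases T) (auto, metis nth_mem)
qed

lemma addr_eqI: "\<forall>p q. at T x p \<longrightarrow> at T x q \<longrightarrow> p = q \<Longrightarrow> at T x p \<Longrightarrow> addr T x = p"
  unfolding addr_def by blast

lemma s_decreasing_at_addr:
  assumes "s_decreasing n s T" "x \<in> {1..n}"
  shows "at T x (addr T x)"
proof -
  obtain p where "at T x p" using assms unfolding s_decreasing_def by blast
  then show ?thesis using addr_eqI assms(1) unfolding s_decreasing_def by metis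
qed

text \<open>Here f b a plays the role of card_T(b,a) for a < b. The second clause is planarity: if
  c sees a strictly left of b, then a lies left of b, so card_T(b,a) = 0; and symmetrically.\<close>

definition tree_inversions :: "nat \<Rightarrow> (nat \<Rightarrow> nat) \<Rightarrow> (nat \<Rightarrow> nat \<Rightarrow> nat) \<Rightarrow> bool" where
  "tree_inversions n s f \<longleftrightarrow>
     (\<forall>a b. 1 \<le> a \<longrightarrow> a < b \<longrightarrow> b \<le> n \<longrightarrow> f b a \<le> s b) \<and>
     (\<forall>a b c. 1 \<le> a \<longrightarrow> a < b \<longrightarrow> b < c \<longrightarrow> c \<le> n \<longrightarrow>
        (f c a < f c b \<longrightarrow> f b a = 0) \<and> (f c b < f c a \<longrightarrow> f b a = s b))"

lemma tree_inversions_tcard: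
  assumes T: "s_decreasing n s T"
  shows "tree_inversions n s (tcard s T)"
proof -
  have at_addr: "at T x (addr T x)" if "x \<in> {1..n}" for x
    using s_decreasing_at_addr[OF T that] .
  have not_prefix: "\<not> prefix (addr T x) (addr T y)" if "1 \<le> x" "x < y" "y \<le> n" for x y
  proof
    assume "prefix (addr T x) (addr T y)"
    then obtain r where r: "addr T y = addr T x @ r" by (auto simp: prefix_def)
    show False
    proof (cases "r = []")
      case True
      then show False using at_same_addr at_addr[of x] at_addr[of y] r that by fastforce
    next
      case False
      then have "y < x"
        using T decr_at_descendant_less at_addr[of x] at_addr[of y] r that
        unfolding s_decreasing_def by fastforce
      then show False using that by simp
    qed
  qed
  have child_bound: "j \<le> s x"
    if "x \<in> {1..n}" "y \<in> {1..n}" "addr T y = addr T x @ j # v" for x y j v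
    using T arity_ok_child_index at_addr that unfolding s_decreasing_def by metis
  show ?thesis unfolding tree_inversions_def tcard_addr_card
  proof (intro conjI allI impI)
    fix a b assume "1 \<le> a" "a < b" "b \<le> n"
    with not_prefix[of a b] child_bound[of b a]
    show "addr_card (s b) (addr T b) (addr T a) \<le> s b"
      by (cases rule: relative_position_cases) (auto simp: addr_card_left addr_card_right)
  next
    fix a b c assume abc: "1 \<le> a" "a < b" "b < c" "c \<le> n"
    have "a < c" using abc by simp
    have bound_a: "\<And>j v. addr T a = addr T c @ j # v \<Longrightarrow> j \<le> s c"
      and bound_b: "\<And>j v. addr T b = addr T c @ j # v \<Longrightarrow> j \<le> s c"
      using child_bound[of c a] child_bound[of c b] abc by auto
    show "addr_card (s b) (addr T b) (addr T a) = 0"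
      if "addr_card (s c) (addr T c) (addr T a) < addr_card (s c) (addr T c) (addr T b)"
      using addr_card_less_left_of[OF not_prefix[of a c] not_prefix[of b c] bound_b that]
        abc \<open>a < c\<close> by (simp add: addr_card_left)
    show "addr_card (s b) (addr T b) (addr T a) = s b"
      if "addr_card (s c) (addr T c) (addr T b) < addr_card (s c) (addr T c) (addr T a)"
      using addr_card_less_left_of[OF not_prefix[of b c] not_prefix[of a c] bound_a that]
        abc \<open>a < c\<close> by (simp add: addr_card_right)
  qed
qed

definition branch :: "(nat \<Rightarrow> nat \<Rightarrow> nat) \<Rightarrow> nat set \<Rightarrow> nat \<Rightarrow> nat set" where
  "branch f L i = {a \<in> L. a < Max L \<and> f (Max L) a = i}"

function inversion_tree :: "(nat \<Rightarrow> nat) \<Rightarrow> (nat \<Rightarrow> nat \<Rightarrow> nat) \<Rightarrow> nat set \<Rightarrow> tr" where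
  "inversion_tree s f L =
     (if finite L \<and> L \<noteq> {}
      then Node (Max L) (map (\<lambda>i. inversion_tree s f (branch f L i)) [0..<Suc (s (Max L))])
      else Leaf)"
  by pat_completeness auto
termination
proof (relation "measure (\<lambda>(s, f, L). card L)")
  fix s f i and L :: "nat set"
  assume "finite L \<and> L \<noteq> {}"
  then have "Max L \<in> L" by simp
  then have "branch f L i \<subset> L" unfolding branch_def by blast
  then show "((s, f, branch f L i), s, f, L) \<in> measure (\<lambda>(s, f, L). card L)"
    using \<open>finite L \<and> L \<noteq> {}\<close> psubset_card_mono by auto
qed auto

declare inversion_tree.simps [simp del]

lemma at_inversion_tree_Nil:
  "at (inversion_tree s f L) x [] \<longleftrightarrow> finite L \<and> L \<noteq> {} \<and> x = Max L"
  by (subst inversion_tree.simps[of s f L]) auto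

lemma at_inversion_tree_Cons:
  "at (inversion_tree s f L) x (i # p) \<longleftrightarrow>
     finite L \<and> L \<noteq> {} \<and> i \<le> s (Max L) \<and> at (inversion_tree s f (branch f L i)) x p"
  by (subst inversion_tree.simps[of s f L]) (auto simp del: upt_Suc)

lemma at_inversion_tree_in: "at (inversion_tree s f L) x p \<Longrightarrow> x \<in> L"
proof (induction s f L arbitrary: p rule: inversion_tree.induct)
  case (1 s f L)
  show ?case
  proof (cases p)
    case Nil
    then show ?thesis using "1.prems" at_inversion_tree_Nil by simp
  next
    case (Cons i q)
    then have "finite L \<and> L \<noteq> {}" "i \<in> set [0..<Suc (s (Max L))]"
      "at (inversion_tree s f (branch f L i)) x q"
      using "1.prems" Cons at_inversion_tree_Cons by (simp_all del: upt_Suc)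
    then have "x \<in> branch f L i" by (rule "1.IH")
    then show ?thesis unfolding branch_def by simp
  qed
qed

lemma at_inversion_tree_ConsD:
  assumes "at (inversion_tree s f L) x (i # p)"
  shows "finite L" "x \<in> branch f L i" "at (inversion_tree s f (branch f L i)) x p"
  using assms at_inversion_tree_in unfolding at_inversion_tree_Cons by blast+

lemma at_inversion_tree_exists:
  assumes "finite L" "\<forall>a\<in>L. \<forall>b\<in>L. a < b \<longrightarrow> f b a \<le> s b" "x \<in> L"
  shows "\<exists>p. at (inversion_tree s f L) x p"
  using assms
proof (induction s f L rule: inversion_tree.induct)
  case (1 s f L)
  show ?case
  proof (cases "x = Max L")
    case True
    then show ?thesis using "1.prems" at_inversion_tree_Nil by blast
  next
    case False
    define i where "i = f (Max L) x"
    have "Max L \<in> L" using "1.prems" by (intro Max_in) auto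
    have "x < Max L" using False "1.prems" by (simp add: order.not_eq_order_implies_strict)
    then have "i \<le> s (Max L)" and "x \<in> branch f L i"
      using "1.prems" \<open>Max L \<in> L\<close> unfolding i_def branch_def by auto
    moreover have "finite L \<and> L \<noteq> {}" "finite (branch f L i)"
      "\<forall>a\<in>branch f L i. \<forall>b\<in>branch f L i. a < b \<longrightarrow> f b a \<le> s b"
      using "1.prems" unfolding branch_def by auto
    moreover have "i \<in> set [0..<Suc (s (Max L))]"
      using \<open>i \<le> s (Max L)\<close> by (simp del: upt_Suc)
    ultimately obtain p where "at (inversion_tree s f (branch f L i)) x p"
      using "1.IH" by blast
    then have "at (inversion_tree s f L) x (i # p)"
      using \<open>i \<le> s (Max L)\<close> \<open>finite L \<and> L \<noteq> {}\<close> at_inversion_tree_Cons by blast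
    then show ?thesis ..
  qed
qed

lemma at_inversion_tree_unique:
  "at (inversion_tree s f L) x p \<Longrightarrow> at (inversion_tree s f L) x q \<Longrightarrow> p = q"
proof (induction s f L arbitrary: p q rule: inversion_tree.induct)
  case (1 s f L)
  show ?case
  proof (cases p; cases q)
    fix i p' j q' assume p: "p = i # p'" and q: "q = j # q'"
    then have "x \<in> branch f L i" "x \<in> branch f L j"
      using "1.prems" at_inversion_tree_ConsD by blast+
    then have "i = j" unfolding branch_def by simp
    with p q "1.prems" show ?thesis using "1.IH" at_inversion_tree_Cons
      by (metis atLeastLessThan_iff le_imp_less_Suc set_upt zero_le)
  qed (use "1.prems" in
      \<open>auto simp: at_inversion_tree_Nil branch_def dest!: at_inversion_tree_ConsD(2)\<close>)
qed

lemma arity_ok_inversion_tree: "arity_ok s (inversion_tree s f L)"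
proof (induction s f L rule: inversion_tree.induct)
  case (1 s f L)
  then show ?case by (subst inversion_tree.simps[of s f L]) (auto simp del: upt_Suc)
qed

lemma decr_inversion_tree: "decr (inversion_tree s f L)"
proof (induction s f L rule: inversion_tree.induct)
  case (1 s f L)
  have "y < Max L" if "inversion_tree s f (branch f L i) = Node y ts" for i y ts
    using at_inversion_tree_in[of s f "branch f L i" y "[]"] that unfolding branch_def by simp
  then show ?case using "1.IH"
    by (subst inversion_tree.simps[of s f L]) (auto simp del: upt_Suc split: tr.split)
qed

lemma addr_card_inversion_tree:
  assumes "\<forall>a\<in>L. \<forall>b\<in>L. \<forall>c\<in>L. a < b \<longrightarrow> b < c \<longrightarrow>
             (f c a < f c b \<longrightarrow> f b a = 0) \<and> (f c b < f c a \<longrightarrow> f b a = s b)"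
    and "a < b" "at (inversion_tree s f L) a pa" "at (inversion_tree s f L) b pb"
  shows "addr_card (s b) pb pa = f b a"
  using assms
proof (induction s f L arbitrary: pa pb rule: inversion_tree.induct)
  case (1 s f L)
  note planar = "1.prems"(1) and a_at = "1.prems"(3) and b_at = "1.prems"(4)
  have "a \<in> L" "b \<in> L" using a_at b_at at_inversion_tree_in by blast+
  then have L: "finite L \<and> L \<noteq> {}"
    using b_at by (cases pb) (auto simp: at_inversion_tree_Nil dest: at_inversion_tree_ConsD(1))
  then have "Max L \<in> L" and "b \<le> Max L" using \<open>b \<in> L\<close> by auto
  then obtain i u where pa: "pa = i # u"
    using a_at \<open>a < b\<close> at_inversion_tree_Nil by (cases pa) auto
  then have a_branch: "a \<in> branch f L i"
    and a_at': "at (inversion_tree s f (branch f L i)) a u"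
    using a_at at_inversion_tree_ConsD by blast+
  show ?case
  proof (cases pb)
    case Nil
    then have "b = Max L" using b_at at_inversion_tree_Nil by blast
    then show ?thesis using pa Nil a_branch addr_card_child[of _ "[]"] unfolding branch_def by simp
  next
    case (Cons j v)
    then have b_branch: "b \<in> branch f L j"
      and b_at': "at (inversion_tree s f (branch f L j)) b v"
      using b_at at_inversion_tree_ConsD by blast+
    have planar_Max: "(f (Max L) a < f (Max L) b \<longrightarrow> f b a = 0) \<and>
        (f (Max L) b < f (Max L) a \<longrightarrow> f b a = s b)"
      using planar[rule_format, OF \<open>a \<in> L\<close> \<open>b \<in> L\<close> \<open>Max L \<in> L\<close> \<open>a < b\<close>] b_branch
      unfolding branch_def by simp
    consider "i = j" | "i < j" | "j < i" by linarith
    then show ?thesis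
    proof cases
      case 1
      have "i \<in> set [0..<Suc (s (Max L))]"
        using a_at pa at_inversion_tree_Cons by (simp del: upt_Suc)
      moreover have "\<forall>a\<in>branch f L i. \<forall>b\<in>branch f L i. \<forall>c\<in>branch f L i.
          a < b \<longrightarrow> b < c \<longrightarrow> (f c a < f c b \<longrightarrow> f b a = 0) \<and> (f c b < f c a \<longrightarrow> f b a = s b)"
        unfolding branch_def by (intro ballI impI) (clarsimp simp: planar[rule_format])
      ultimately have "addr_card (s b) v u = f b a"
        using "1.IH" L \<open>a < b\<close> a_at' b_at'[folded 1] by blast
      then show ?thesis using pa Cons 1 by simp
    next
      case 2
      then have "left_of pa pb" using pa Cons left_ofI[of i j "[]"] by simp
      moreover have "f b a = 0" using planar_Max a_branch b_branch 2 unfolding branch_def by simp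
      ultimately show ?thesis by (simp add: addr_card_left)
    next
      case 3
      then have "left_of pb pa" using pa Cons left_ofI[of j i "[]"] by simp
      moreover have "f b a = s b" using planar_Max a_branch b_branch 3 unfolding branch_def by simp
      ultimately show ?thesis by (simp add: addr_card_right)
    qed
  qed
qed

lemma exists_tree_with_inversions:
  assumes "tree_inversions n s f"
  shows "\<exists>T. s_decreasing n s T \<and>
    (\<forall>a b. 1 \<le> a \<longrightarrow> a < b \<longrightarrow> b \<le> n \<longrightarrow> tcard s T b a = f b a)"
proof -
  let ?T = "inversion_tree s f {1..n}"
  have labels: "{x. \<exists>p. at ?T x p} = {1..n}"
  proof
    show "{x. \<exists>p. at ?T x p} \<subseteq> {1..n}" using at_inversion_tree_in by blast
    show "{1..n} \<subseteq> {x. \<exists>p. at ?T x p}"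
      using assms at_inversion_tree_exists[of "{1..n}" f s] unfolding tree_inversions_def by auto
  qed
  have unique: "\<forall>x p q. at ?T x p \<longrightarrow> at ?T x q \<longrightarrow> p = q"
    using at_inversion_tree_unique by blast
  have "tcard s ?T b a = f b a" if ab: "1 \<le> a" "a < b" "b \<le> n" for a b
  proof -
    have "a \<in> {1..n}" "b \<in> {1..n}" using ab by auto
    then obtain pa pb where "at ?T a pa" "at ?T b pb" using labels by blast
    moreover have "addr ?T a = pa" "addr ?T b = pb" using addr_eqI unique calculation by blast+
    ultimately show ?thesis
      using addr_card_inversion_tree[of "{1..n}" f s] assms ab
      unfolding tcard_addr_card tree_inversions_def by auto
  qed
  moreover have "s_decreasing n s ?T"
    unfolding s_decreasing_def
    using labels unique arity_ok_inversion_tree decr_inversion_tree by blast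
  ultimately show ?thesis by blast
qed

definition inv_le :: "nat \<Rightarrow> (nat \<Rightarrow> nat \<Rightarrow> nat) \<Rightarrow> (nat \<Rightarrow> nat \<Rightarrow> nat) \<Rightarrow> bool" where
  "inv_le n f g \<longleftrightarrow> (\<forall>a b. 1 \<le> a \<longrightarrow> a < b \<longrightarrow> b \<le> n \<longrightarrow> f b a \<le> g b a)"

definition tamari_inversions :: "nat \<Rightarrow> (nat \<Rightarrow> nat \<Rightarrow> nat) \<Rightarrow> bool" where
  "tamari_inversions n f \<longleftrightarrow> (\<forall>a b c. 1 \<le> a \<longrightarrow> a < b \<longrightarrow> b < c \<longrightarrow> c \<le> n \<longrightarrow> f c a \<le> f c b)"

lemma s_weak_le_iff_inv_le: "s_weak_le n s T U \<longleftrightarrow> inv_le n (tcard s T) (tcard s U)"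
  unfolding s_weak_le_def inv_le_def ..

lemma s_tamari_iff: "s_tamari n s T \<longleftrightarrow> s_decreasing n s T \<and> tamari_inversions n (tcard s T)"
  unfolding s_tamari_def tamari_inversions_def ..

lemma inv_le_trans: "inv_le n f g \<Longrightarrow> inv_le n g h \<Longrightarrow> inv_le n f h"
  unfolding inv_le_def by (meson le_trans)

lemma tamari_inversions_cong:
  assumes "inv_le n f g" "inv_le n g f" "tamari_inversions n f"
  shows "tamari_inversions n g"
  unfolding tamari_inversions_def
proof (intro allI impI)
  fix a b c assume abc: "1 \<le> a" "a < b" "b < c" "c \<le> n"
  then have "g c a = f c a" "g c b = f c b"
    using assms(1,2) unfolding inv_le_def by (meson antisym less_trans order.trans less_imp_le)+
  then show "g c a \<le> g c b" using assms(3) abc unfolding tamari_inversions_def by simp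
qed

lemma exists_tree_inv_equiv:
  assumes "tree_inversions n s f"
  obtains T where "s_decreasing n s T" "inv_le n (tcard s T) f" "inv_le n f (tcard s T)"
  using exists_tree_with_inversions[OF assms] unfolding inv_le_def by fastforce

lemma s_meet_from_inversions:
  assumes "tree_inversions n s g" "tamari_inversions n g"
    and "inv_le n g (tcard s T)" "inv_le n g (tcard s T')"
    and greatest: "\<And>U. s_decreasing n s U \<Longrightarrow> inv_le n (tcard s U) (tcard s T) \<Longrightarrow>
      inv_le n (tcard s U) (tcard s T') \<Longrightarrow> inv_le n (tcard s U) g"
  shows "(\<exists>M. is_s_meet n s T T' M) \<and> (\<forall>M. is_s_meet n s T T' M \<longrightarrow> s_tamari n s M)"
proof -
  obtain M0 where M0: "s_decreasing n s M0" "inv_le n (tcard s M0) g" "inv_le n g (tcard s M0)"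
    using exists_tree_inv_equiv[OF assms(1)] .
  have meet: "is_s_meet n s T T' M0"
    unfolding is_s_meet_def s_weak_le_iff_inv_le
    using M0 assms(3,4) greatest inv_le_trans by blast
  have "s_tamari n s M" if "is_s_meet n s T T' M" for M
  proof -
    have "inv_le n (tcard s M) g" "inv_le n g (tcard s M)"
      using that meet greatest M0(3) inv_le_trans unfolding is_s_meet_def s_weak_le_iff_inv_le
      by blast+
    then show ?thesis
      using that assms(2) tamari_inversions_cong
      unfolding is_s_meet_def s_tamari_iff by blast
  qed
  then show ?thesis using meet by blast
qed

lemma s_join_from_inversions:
  assumes "tree_inversions n s h" "tamari_inversions n h"
    and "inv_le n (tcard s T) h" "inv_le n (tcard s T') h"
    and least: "\<And>U. s_decreasing n s U \<Longrightarrow> inv_le n (tcard s T) (tcard s U) \<Longrightarrow>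
      inv_le n (tcard s T') (tcard s U) \<Longrightarrow> inv_le n h (tcard s U)"
  shows "(\<exists>J. is_s_join n s T T' J) \<and> (\<forall>J. is_s_join n s T T' J \<longrightarrow> s_tamari n s J)"
proof -
  obtain J0 where J0: "s_decreasing n s J0" "inv_le n (tcard s J0) h" "inv_le n h (tcard s J0)"
    using exists_tree_inv_equiv[OF assms(1)] .
  have join: "is_s_join n s T T' J0"
    unfolding is_s_join_def s_weak_le_iff_inv_le
    using J0 assms(3,4) least inv_le_trans by blast
  have "s_tamari n s J" if "is_s_join n s T T' J" for J
  proof -
    have "inv_le n (tcard s J) h" "inv_le n h (tcard s J)"
      using that join least J0(2) inv_le_trans unfolding is_s_join_def s_weak_le_iff_inv_le
      by blast+
    then show ?thesis
      using that assms(2) tamari_inversions_cong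
      unfolding is_s_join_def s_tamari_iff by blast
  qed
  then show ?thesis using join by blast
qed

definition inv_inf :: "(nat \<Rightarrow> nat \<Rightarrow> nat) set \<Rightarrow> nat \<Rightarrow> nat \<Rightarrow> nat" where
  "inv_inf F b a = (LEAST k. \<exists>f\<in>F. f b a = k)"

lemma inv_inf_attained: "F \<noteq> {} \<Longrightarrow> \<exists>f\<in>F. f b a = inv_inf F b a"
  unfolding inv_inf_def by (rule LeastI_ex) blast

lemma inv_inf_le: "f \<in> F \<Longrightarrow> inv_inf F b a \<le> f b a"
  unfolding inv_inf_def by (rule Least_le) blast

lemma inv_le_inv_inf:
  assumes "F \<noteq> {}" "\<And>f. f \<in> F \<Longrightarrow> inv_le n g f"
  shows "inv_le n g (inv_inf F)"
  unfolding inv_le_def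
proof (intro allI impI)
  fix a b assume "1 \<le> a" "a < b" "b \<le> n"
  moreover obtain f where "f \<in> F" "f b a = inv_inf F b a" using inv_inf_attained assms(1) by blast
  ultimately show "g b a \<le> inv_inf F b a" using assms(2) unfolding inv_le_def by metis
qed

lemma inv_le_inv_inf_member: "f \<in> F \<Longrightarrow> inv_le n (inv_inf F) f"
  unfolding inv_le_def by (simp add: inv_inf_le)

lemma tamari_inversions_inv_inf:
  assumes "F \<noteq> {}" "\<And>f. f \<in> F \<Longrightarrow> tamari_inversions n f"
  shows "tamari_inversions n (inv_inf F)"
  unfolding tamari_inversions_def
proof (intro allI impI)
  fix a b c assume abc: "1 \<le> a" "a < b" "b < c" "c \<le> n"
  obtain f where f: "f \<in> F" "f c b = inv_inf F c b" using inv_inf_attained assms(1) by blast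
  then have "f c a \<le> f c b" using assms(2) abc unfolding tamari_inversions_def by blast
  then show "inv_inf F c a \<le> inv_inf F c b" using inv_inf_le[OF f(1), of c a] f(2) by simp
qed

lemma tree_inversions_inv_inf:
  assumes "F \<noteq> {}" "\<And>f. f \<in> F \<Longrightarrow> tree_inversions n s f \<and> tamari_inversions n f"
  shows "tree_inversions n s (inv_inf F)"
  unfolding tree_inversions_def
proof (intro conjI allI impI)
  fix a b assume "1 \<le> a" "a < b" "b \<le> n"
  moreover obtain f where f: "f \<in> F" "f b a = inv_inf F b a" using inv_inf_attained assms(1) by blast
  ultimately have "f b a \<le> s b" using assms(2)[OF f(1)] unfolding tree_inversions_def by blast
  then show "inv_inf F b a \<le> s b" using f(2) by simp
next
  fix a b c assume abc: "1 \<le> a" "a < b" "b < c" "c \<le> n"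
  show "inv_inf F b a = 0" if "inv_inf F c a < inv_inf F c b"
  proof -
    obtain f where f: "f \<in> F" "f c a = inv_inf F c a" using inv_inf_attained assms(1) by blast
    then have "f c a < f c b" using inv_inf_le[of f F c b] that by simp
    then have "f b a = 0" using f(1) assms(2) abc unfolding tree_inversions_def by blast
    then show ?thesis using inv_inf_le[OF f(1), of b a] by simp
  qed
  have "inv_inf F c a \<le> inv_inf F c b"
    using tamari_inversions_inv_inf[OF assms(1)] assms(2) abc unfolding tamari_inversions_def by blast
  then show "inv_inf F b a = s b" if "inv_inf F c b < inv_inf F c a" using that by linarith
qed

definition tamari_proj :: "(nat \<Rightarrow> nat \<Rightarrow> nat) \<Rightarrow> nat \<Rightarrow> nat \<Rightarrow> nat" where
  "tamari_proj u c a = Min (u c ` {a..<c})"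

lemma tamari_proj_le: "a \<le> b \<Longrightarrow> b < c \<Longrightarrow> tamari_proj u c a \<le> u c b"
  unfolding tamari_proj_def by (intro Min_le) auto

lemma tamari_proj_attained: "a < c \<Longrightarrow> \<exists>b. a \<le> b \<and> b < c \<and> tamari_proj u c a = u c b"
proof -
  assume "a < c"
  then have "tamari_proj u c a \<in> u c ` {a..<c}" unfolding tamari_proj_def by (intro Min_in) auto
  then show ?thesis by auto
qed

lemma tamari_inversions_tamari_proj: "tamari_inversions n (tamari_proj u)"
  unfolding tamari_inversions_def
proof (intro allI impI)
  fix a b c assume "1 \<le> a" "a < b" "b < c" "c \<le> n"
  then obtain x where "b \<le> x" "x < c" "tamari_proj u c b = u c x" using tamari_proj_attained by blast
  then show "tamari_proj u c a \<le> tamari_proj u c b" using tamari_proj_le[of a x c u] \<open>a < b\<close> by simp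
qed

lemma inv_le_tamari_proj: "inv_le n (tamari_proj u) u"
  unfolding inv_le_def by (simp add: tamari_proj_le)

lemma inv_le_tamari_proj_greatest:
  assumes "tamari_inversions n g" "inv_le n g u"
  shows "inv_le n g (tamari_proj u)"
  unfolding inv_le_def
proof (intro allI impI)
  fix a c assume ac: "1 \<le> a" "a < c" "c \<le> n"
  then obtain x where x: "a \<le> x" "x < c" "tamari_proj u c a = u c x" using tamari_proj_attained by blast
  have "g c a \<le> g c x"
    using assms(1) ac x unfolding tamari_inversions_def by (cases "a = x") auto
  also have "\<dots> \<le> u c x" using assms(2) ac x unfolding inv_le_def by simp
  finally show "g c a \<le> tamari_proj u c a" using x by simp
qed

lemma tree_inversions_tamari_proj:
  assumes u: "tree_inversions n s u"
  shows "tree_inversions n s (tamari_proj u)"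
  unfolding tree_inversions_def
proof (intro conjI allI impI)
  fix a b assume "1 \<le> a" "a < b" "b \<le> n"
  then have "u b a \<le> s b" using u unfolding tree_inversions_def by blast
  then show "tamari_proj u b a \<le> s b" using tamari_proj_le[of a a b u] \<open>a < b\<close> by simp
next
  fix a b c assume abc: "1 \<le> a" "a < b" "b < c" "c \<le> n"
  show "tamari_proj u b a = 0" if less: "tamari_proj u c a < tamari_proj u c b"
  proof -
    have "a < c" using abc by simp
    then obtain x where x: "a \<le> x" "x < c" "tamari_proj u c a = u c x"
      using tamari_proj_attained by blast
    have "x < b"
    proof (rule ccontr)
      assume "\<not> x < b"
      then have "tamari_proj u c b \<le> u c x" using tamari_proj_le x(2) by simp
      then show False using less x(3) by simp
    qed
    moreover have "u c x < u c b" using tamari_proj_le[of b b c u] less x abc by simp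
    ultimately have "u b x = 0" using u abc x unfolding tree_inversions_def by simp
    then show ?thesis using tamari_proj_le[of a x b u] x \<open>x < b\<close> by simp
  qed
  have "tamari_proj u c a \<le> tamari_proj u c b"
    using tamari_inversions_tamari_proj[of n u] abc unfolding tamari_inversions_def by blast
  then show "tamari_proj u b a = s b" if "tamari_proj u c b < tamari_proj u c a"
    using that by linarith
qed

lemma s_tamari_inversions:
  "s_tamari n s T \<Longrightarrow> tree_inversions n s (tcard s T) \<and> tamari_inversions n (tcard s T)"
  using tree_inversions_tcard unfolding s_tamari_iff by blast

lemma s_meet_tamari:
  assumes "s_tamari n s T" "s_tamari n s T'"
  shows "(\<exists>M. is_s_meet n s T T' M) \<and> (\<forall>M. is_s_meet n s T T' M \<longrightarrow> s_tamari n s M)"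
proof -
  let ?F = "{tcard s T, tcard s T'}"
  have F: "\<And>f. f \<in> ?F \<Longrightarrow> tree_inversions n s f \<and> tamari_inversions n f"
    using s_tamari_inversions[OF assms(1)] s_tamari_inversions[OF assms(2)] by auto
  show ?thesis
  proof (rule s_meet_from_inversions)
    show "tree_inversions n s (inv_inf ?F)" by (rule tree_inversions_inv_inf) (use F in auto)
    show "tamari_inversions n (inv_inf ?F)" by (rule tamari_inversions_inv_inf) (use F in auto)
    show "inv_le n (inv_inf ?F) (tcard s T)" "inv_le n (inv_inf ?F) (tcard s T')"
      by (simp_all add: inv_le_inv_inf_member)
    show "inv_le n (tcard s U) (inv_inf ?F)"
      if "inv_le n (tcard s U) (tcard s T)" "inv_le n (tcard s U) (tcard s T')" for U
      using that by (intro inv_le_inv_inf) auto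
  qed
qed

lemma s_join_tamari:
  assumes "s_tamari n s T" "s_tamari n s T'"
  shows "(\<exists>J. is_s_join n s T T' J) \<and> (\<forall>J. is_s_join n s T T' J \<longrightarrow> s_tamari n s J)"
proof -
  let ?F = "{f. tree_inversions n s f \<and> tamari_inversions n f \<and>
    inv_le n (tcard s T) f \<and> inv_le n (tcard s T') f}"
  have "inv_le n f (\<lambda>b a. s b)" if "tree_inversions n s f" for f
    using that unfolding inv_le_def tree_inversions_def by blast
  then have "(\<lambda>b a. s b) \<in> ?F"
    using s_tamari_inversions assms unfolding tree_inversions_def tamari_inversions_def by simp
  then have F: "?F \<noteq> {}" by blast
  show ?thesis
  proof (rule s_join_from_inversions)
    show "tree_inversions n s (inv_inf ?F)" by (rule tree_inversions_inv_inf[OF F]) simp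
    show "tamari_inversions n (inv_inf ?F)" by (rule tamari_inversions_inv_inf[OF F]) simp
    show "inv_le n (tcard s T) (inv_inf ?F)" "inv_le n (tcard s T') (inv_inf ?F)"
      by (rule inv_le_inv_inf[OF F], simp)+
    fix U assume U: "s_decreasing n s U"
      "inv_le n (tcard s T) (tcard s U)" "inv_le n (tcard s T') (tcard s U)"
    have "tree_inversions n s (tamari_proj (tcard s U))"
      using tree_inversions_tamari_proj tree_inversions_tcard U(1) by blast
    moreover have "inv_le n (tcard s T) (tamari_proj (tcard s U))"
      "inv_le n (tcard s T') (tamari_proj (tcard s U))"
      using inv_le_tamari_proj_greatest U(2,3) s_tamari_inversions assms by blast+
    ultimately have "tamari_proj (tcard s U) \<in> ?F"
      using tamari_inversions_tamari_proj by blast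
    then have "inv_le n (inv_inf ?F) (tamari_proj (tcard s U))" by (rule inv_le_inv_inf_member)
    then show "inv_le n (inv_inf ?F) (tcard s U)" using inv_le_tamari_proj by (rule inv_le_trans)
  qed
qed

theorem theorem2p2:
  fixes n :: nat and s :: "nat \<Rightarrow> nat" and T T' :: tr
  assumes "s_tamari n s T" and "s_tamari n s T'"
  shows "(\<exists>J. is_s_join n s T T' J) \<and> (\<forall>J. is_s_join n s T T' J \<longrightarrow> s_tamari n s J) \<and>
         (\<exists>M. is_s_meet n s T T' M) \<and> (\<forall>M. is_s_meet n s T T' M \<longrightarrow> s_tamari n s M)"
  using s_join_tamari[OF assms] s_meet_tamari[OF assms] by (intro conjI) blast+

end
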